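(* Let $E$ be an $\mathbb{R}$-group, $X$ a locally compact (Hausdorff) space not reduced to one point in which every point has a countable base of neighbourhoods, and $\mathcal{H}=(H_\varepsilon)_{\varepsilon\in E}$ a continuous absorptive action of $E$ on $X$ with center $\omega$. Then for every nonconstant continuous group homomorphism $h:E\to\mathbb{R}_+^*$ such that, for every $\alpha\in E$, the set $\{\varepsilon\in E:\varepsilon\ge\alpha\}$ is integrable for $h\cdot m$ ($m$ a Haar measure on $E$), there exists a nontrivial positive Radon measure $\lambda$ on $X$ with $H_\varepsilon(\lambda)=h(\varepsilon^{-1})\lambda$ for all $\varepsilon\in E$. In particular a nontrivial $\mathcal{H}$-homogeneous positive Radon measure on $X$ always exists.
   Context: An $\mathbb{R}$-group is an abelian group $E$ (operation written multiplicatively) whose underlying set is a subset of $\mathbb{R}$ containing all positive integers, such that: (RG1) with the natural order of $\mathbb{R}$, $E$ is a totally ordered group; (RG2) with the topology induced from $\mathbb{R}$, $E$ is a locally compact group; (RG3) there is at least one nonconstant continuous homomorphism $h:E\to\mathbb{R}_+^*$ such that for every $\alpha\in E$ the set $\{\varepsilon\in E:\varepsilon\ge\alpha\}$ is integrable for $h\cdot m$, $m$ a Haar measure on $E$. $e$ is the identity of $E$, $\varepsilon^{-1}$ the group inverse; inequalities refer to the order of $\mathbb{R}$. An action of $E$ on $X$ is a family $(H_\varepsilon)_{\varepsilon\in E}$ of bijections of $X$ with $H_\varepsilon\circ H_{\varepsilon'}=H_{\varepsilon\varepsilon'}$, $H_e=\mathrm{id}_X$; continuous if $(\varepsilon,x)\mapsto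 H_\varepsilon(x)$ is continuous on $E\times X$; absorptive if some $\omega\in X$ satisfies: for every neighbourhood $V$ of $\omega$ and every $x\in X$ there are a neighbourhood $U$ of $x$ and $\alpha\in E$ with $H_{\varepsilon^{-1}}(U)\subset V$ for all $\varepsilon\le\alpha$; this $\omega$ is unique and called the center. $H_\varepsilon(\lambda)$ is the image measure $\varphi\mapsto\int\varphi(H_\varepsilon(x))\,d\lambda(x)$, $\varphi\in\mathcal{K}(X)$. A positive Radon measure $\lambda$ is $\mathcal{H}$-homogeneous if for each $\varepsilon$ there is $c(\varepsilon)>0$ with $H_\varepsilon(\lambda)=c(\varepsilon)\lambda$. A Radon measure is nontrivial if it is different from $0$ and from $\delta_\omega$. *)

theory Defs
  imports "HOL-Analysis.Analysis"
begin

definition real_abelian_group :: "real set \<Rightarrow> (real \<Rightarrow> real \<Rightarrow> real) \<Rightarrow> real \<Rightarrow> (real \<Rightarrow> real) \<Rightarrow> bool" where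
  "real_abelian_group E mul e iv \<longleftrightarrow>
     (\<forall>x\<in>E. \<forall>y\<in>E. mul x y \<in> E) \<and>
     (\<forall>x\<in>E. \<forall>y\<in>E. \<forall>z\<in>E. mul (mul x y) z = mul x (mul y z)) \<and>
     (\<forall>x\<in>E. \<forall>y\<in>E. mul x y = mul y x) \<and>
     e \<in> E \<and> (\<forall>x\<in>E. mul e x = x) \<and>
     (\<forall>x\<in>E. iv x \<in> E \<and> mul (iv x) x = e)"

text \<open>Haar measure on the locally compact group E (topology induced from the reals):
  a nonzero Borel measure on E, finite on compact sets, invariant under translations.
  (E is second countable, so locally finite Borel measures on E are automatically Radon.)\<close>
definition haar_measure :: "real set \<Rightarrow> (real \<Rightarrow> real \<Rightarrow> real) \<Rightarrow> real measure \<Rightarrow> bool" where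
  "haar_measure E mul m \<longleftrightarrow>
     sets m = sets (restrict_space borel E) \<and>
     emeasure m E \<noteq> 0 \<and>
     (\<forall>K. K \<subseteq> E \<and> compact K \<longrightarrow> emeasure m K < \<infinity>) \<and>
     (\<forall>a\<in>E. \<forall>A\<in>sets m. emeasure m ((\<lambda>x. mul a x) ` A) = emeasure m A)"

definition pos_char :: "real set \<Rightarrow> (real \<Rightarrow> real \<Rightarrow> real) \<Rightarrow> (real \<Rightarrow> real) \<Rightarrow> bool" where
  "pos_char E mul h \<longleftrightarrow>
     (\<forall>x\<in>E. 0 < h x) \<and> (\<forall>x\<in>E. \<forall>y\<in>E. h (mul x y) = h x * h y) \<and> continuous_on E h"

definition nonconstant_on :: "real set \<Rightarrow> (real \<Rightarrow> real) \<Rightarrow> bool" where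
  "nonconstant_on E h \<longleftrightarrow> (\<exists>x\<in>E. \<exists>y\<in>E. h x \<noteq> h y)"

definition upper_integrable :: "real set \<Rightarrow> real measure \<Rightarrow> (real \<Rightarrow> real) \<Rightarrow> bool" where
  "upper_integrable E m h \<longleftrightarrow> (\<forall>\<alpha>\<in>E. set_integrable m {\<epsilon>\<in>E. \<alpha> \<le> \<epsilon>} h)"

definition R_group :: "real set \<Rightarrow> (real \<Rightarrow> real \<Rightarrow> real) \<Rightarrow> real \<Rightarrow> (real \<Rightarrow> real) \<Rightarrow> bool" where
  "R_group E mul e iv \<longleftrightarrow>
     real_abelian_group E mul e iv \<and>
     (\<forall>n::nat. 1 \<le> n \<longrightarrow> real n \<in> E) \<and>
     \<comment> \<open>(RG1) totally ordered group for the order of the reals\<close>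
     (\<forall>x\<in>E. \<forall>y\<in>E. \<forall>z\<in>E. x \<le> y \<longrightarrow> mul x z \<le> mul y z) \<and>
     \<comment> \<open>(RG2) locally compact topological group for the induced topology\<close>
     continuous_on (E \<times> E) (\<lambda>p. mul (fst p) (snd p)) \<and>
     continuous_on E iv \<and>
     locally_compact_space (top_of_set E) \<and>
     \<comment> \<open>(RG3)\<close>
     (\<exists>h. pos_char E mul h \<and> nonconstant_on E h \<and>
        (\<exists>m. haar_measure E mul m \<and> upper_integrable E m h))"

definition action :: "real set \<Rightarrow> (real \<Rightarrow> real \<Rightarrow> real) \<Rightarrow> real \<Rightarrow> (real \<Rightarrow> 'a \<Rightarrow> 'a) \<Rightarrow> bool" where
  "action E mul e H \<longleftrightarrow>
     (\<forall>\<epsilon>\<in>E. bij (H \<epsilon>)) \<and>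
     (\<forall>\<epsilon>\<in>E. \<forall>\<epsilon>'\<in>E. H \<epsilon> \<circ> H \<epsilon>' = H (mul \<epsilon> \<epsilon>')) \<and>
     H e = id"

definition continuous_action :: "real set \<Rightarrow> (real \<Rightarrow> 'a::topological_space \<Rightarrow> 'a) \<Rightarrow> bool" where
  "continuous_action E H \<longleftrightarrow> continuous_on (E \<times> UNIV) (\<lambda>p. H (fst p) (snd p))"

definition absorptive_center :: "real set \<Rightarrow> (real \<Rightarrow> real) \<Rightarrow> (real \<Rightarrow> 'a::topological_space \<Rightarrow> 'a) \<Rightarrow> 'a \<Rightarrow> bool" where
  "absorptive_center E iv H \<omega> \<longleftrightarrow>
     (\<forall>V. open V \<and> \<omega> \<in> V \<longrightarrow>
        (\<forall>x. \<exists>U. \<exists>\<alpha>\<in>E. open U \<and> x \<in> U \<and> (\<forall>\<epsilon>\<in>E. \<epsilon> \<le> \<alpha> \<longrightarrow> H (iv \<epsilon>) ` U \<subseteq> V)))"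

section \<open>Radon measures (Bourbaki: positive linear forms on K(X))\<close>

definition Kc :: "('a::topological_space \<Rightarrow> real) set" where
  "Kc = {\<phi>. continuous_on UNIV \<phi> \<and> compact (closure {x. \<phi> x \<noteq> 0})}"

definition positive_radon :: "(('a::topological_space \<Rightarrow> real) \<Rightarrow> real) \<Rightarrow> bool" where
  "positive_radon L \<longleftrightarrow>
     (\<forall>\<phi>\<in>Kc. \<forall>\<psi>\<in>Kc. L (\<lambda>x. \<phi> x + \<psi> x) = L \<phi> + L \<psi>) \<and>
     (\<forall>\<phi>\<in>Kc. \<forall>c. L (\<lambda>x. c * \<phi> x) = c * L \<phi>) \<and>
     (\<forall>\<phi>\<in>Kc. (\<forall>x. 0 \<le> \<phi> x) \<longrightarrow> 0 \<le> L \<phi>)"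

text \<open>Nontrivial: different (as a Radon measure, i.e. on K(X)) from 0 and from the Dirac measure at \<omega>.\<close>
definition nontrivial_radon :: "'a::topological_space \<Rightarrow> (('a \<Rightarrow> real) \<Rightarrow> real) \<Rightarrow> bool" where
  "nontrivial_radon \<omega> L \<longleftrightarrow> (\<exists>\<phi>\<in>Kc. L \<phi> \<noteq> 0) \<and> (\<exists>\<phi>\<in>Kc. L \<phi> \<noteq> \<phi> \<omega>)"

definition image_radon :: "('a \<Rightarrow> 'a) \<Rightarrow> (('a \<Rightarrow> real) \<Rightarrow> real) \<Rightarrow> (('a \<Rightarrow> real) \<Rightarrow> real)" where
  "image_radon G L = (\<lambda>\<phi>. L (\<phi> \<circ> G))"

definition homogeneous_radon :: "real set \<Rightarrow> (real \<Rightarrow> 'a::topological_space \<Rightarrow> 'a) \<Rightarrow> (('a \<Rightarrow> real) \<Rightarrow> real) \<Rightarrow> bool" where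
  "homogeneous_radon E H L \<longleftrightarrow> positive_radon L \<and>
     (\<forall>\<epsilon>\<in>E. \<exists>c>0. \<forall>\<phi>\<in>Kc. image_radon (H \<epsilon>) L \<phi> = c * L \<phi>)"

end

theory Submission
  imports Defs
begin

text \<open>
  Pick a point x0 different from the center \<omega> and push the measure h\<cdot>m forward
  along the orbit map \<eta> \<mapsto> H \<eta> x0, i.e. consider the linear form
      L(\<phi>) = \<integral> h(\<eta>) \<phi>(H \<eta> x0) dm(\<eta>)      on K(X).
  (1) Absorptivity makes the orbit leave every compact set as \<eta> becomes small, so for
      \<phi> \<in> K(X) the integrand vanishes below some \<beta>; on {\<eta> \<ge> \<beta>} it is bounded by a
      multiple of h, which is integrable by (RG3). Hence L is a positive Radon measure.
  (2) Translation invariance of m and multiplicativity of h give H \<epsilon> (L) = h(\<epsilon>\<inverse>) L.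
  (3) A bump function \<phi>0 \<ge> 0 vanishing at \<omega> with \<phi>0(x0) > 0 yields a continuous nonnegative
      integrand positive at e; since nonempty open subsets of E have positive Haar measure
      (E is Lindelof), L(\<phi>0) > 0 = \<phi>0(\<omega>), so L is neither 0 nor the Dirac measure at \<omega>.
\<close>

lemma grp:
  assumes "real_abelian_group E mul e iv"
  shows grp_closed: "\<And>x y. x \<in> E \<Longrightarrow> y \<in> E \<Longrightarrow> mul x y \<in> E"
    and grp_assoc: "\<And>x y z. x \<in> E \<Longrightarrow> y \<in> E \<Longrightarrow> z \<in> E \<Longrightarrow> mul (mul x y) z = mul x (mul y z)"
    and grp_comm: "\<And>x y. x \<in> E \<Longrightarrow> y \<in> E \<Longrightarrow> mul x y = mul y x"
    and grp_e: "e \<in> E"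
    and grp_lid: "\<And>x. x \<in> E \<Longrightarrow> mul e x = x"
    and grp_ivE: "\<And>x. x \<in> E \<Longrightarrow> iv x \<in> E"
    and grp_linv: "\<And>x. x \<in> E \<Longrightarrow> mul (iv x) x = e"
  using assms unfolding real_abelian_group_def by blast+

lemma grp_cancel:
  assumes G: "real_abelian_group E mul e iv" and a: "a \<in> E" and x: "x \<in> E"
  shows "mul (iv a) (mul a x) = x" and "mul a (mul (iv a) x) = x"
proof -
  have ia: "iv a \<in> E" using grp_ivE[OF G a] .
  have "mul (iv a) (mul a x) = mul (mul (iv a) a) x" using grp_assoc[OF G ia a x] by simp
  also have "\<dots> = x" using grp_linv[OF G a] grp_lid[OF G x] by simp
  finally show "mul (iv a) (mul a x) = x" .
  have "mul a (mul (iv a) x) = mul (mul a (iv a)) x" using grp_assoc[OF G a ia x] by simp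
  also have "\<dots> = mul (mul (iv a) a) x" using grp_comm[OF G a ia] by simp
  also have "\<dots> = x" using grp_linv[OF G a] grp_lid[OF G x] by simp
  finally show "mul a (mul (iv a) x) = x" .
qed

lemma grp_translate_onto:
  assumes G: "real_abelian_group E mul e iv" and a: "a \<in> E" and s: "s \<in> E"
  shows "mul (mul a (iv s)) s = a"
proof -
  have is': "iv s \<in> E" using grp_ivE[OF G s] .
  have "mul (mul a (iv s)) s = mul a (mul (iv s) s)" using grp_assoc[OF G a is' s] .
  also have "\<dots> = mul a e" using grp_linv[OF G s] by simp
  also have "\<dots> = a" using grp_comm[OF G a grp_e[OF G]] grp_lid[OF G a] by simp
  finally show ?thesis .
qed

lemma action_apply_mul:
  assumes "action E mul e H" and "a \<in> E" and "b \<in> E"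
  shows "H a (H b x) = H (mul a b) x"
  using assms unfolding action_def by (metis comp_apply)

lemma action_inverse_cancel:
  assumes act: "action E mul e H" and G: "real_abelian_group E mul e iv" and \<eta>: "\<eta> \<in> E"
  shows "H (iv \<eta>) (H \<eta> x) = x"
proof -
  have "H (iv \<eta>) (H \<eta> x) = H (mul (iv \<eta>) \<eta>) x"
    using action_apply_mul[OF act grp_ivE[OF G \<eta>] \<eta>] .
  also have "\<dots> = x" using act grp_linv[OF G \<eta>] unfolding action_def by simp
  finally show ?thesis .
qed

lemma orbit_continuous:
  assumes "continuous_action E H"
  shows "continuous_on E (\<lambda>\<eta>. H \<eta> x)"
proof -
  have c: "continuous_on (E \<times> UNIV) (\<lambda>p. H (fst p) (snd p))"
    using assms unfolding continuous_action_def .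
  have "continuous_on E (\<lambda>\<eta>. (\<eta>, x))" by (intro continuous_intros)
  moreover have "(\<lambda>\<eta>. (\<eta>, x)) ` E \<subseteq> E \<times> UNIV" by auto
  ultimately have "continuous_on E ((\<lambda>p. H (fst p) (snd p)) \<circ> (\<lambda>\<eta>. (\<eta>, x)))"
    using continuous_on_compose continuous_on_subset c by blast
  thus ?thesis by (simp add: o_def)
qed

text \<open>
  Absorptivity, read backwards along an orbit: a point x0 \<noteq> \<omega> is eventually (for \<eta> small)
  outside any given compact set, since a finite subcover of K is pulled into a neighbourhood
  of \<omega> avoiding x0.
\<close>
lemma orbit_escapes_compacts:
  fixes H :: "real \<Rightarrow> 'a::t2_space \<Rightarrow> 'a"
  assumes act: "action E mul e H" and G: "real_abelian_group E mul e iv"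
    and ab: "absorptive_center E iv H \<omega>" and ne: "x0 \<noteq> \<omega>" and K: "compact K"
  shows "\<exists>\<beta>\<in>E. \<forall>\<eta>\<in>E. \<eta> \<le> \<beta> \<longrightarrow> H \<eta> x0 \<notin> K"
proof -
  obtain V where V: "open V" "\<omega> \<in> V" "x0 \<notin> V"
    using t1_space[OF ne[symmetric]] by blast
  have "\<forall>y. \<exists>U \<alpha>. \<alpha> \<in> E \<and> open U \<and> y \<in> U \<and> (\<forall>\<epsilon>\<in>E. \<epsilon> \<le> \<alpha> \<longrightarrow> H (iv \<epsilon>) ` U \<subseteq> V)"
    using ab V unfolding absorptive_center_def by blast
  then obtain U \<alpha> where U: "\<And>y. \<alpha> y \<in> E \<and> open (U y) \<and> y \<in> U y \<and>
      (\<forall>\<epsilon>\<in>E. \<epsilon> \<le> \<alpha> y \<longrightarrow> H (iv \<epsilon>) ` U y \<subseteq> V)"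
    by metis
  obtain C where C: "C \<subseteq> K" "finite C" "K \<subseteq> (\<Union>y\<in>C. U y)"
    using compactE_image[OF K, of K U] U by blast
  define \<beta> where "\<beta> = Min (insert e (\<alpha> ` C))"
  have fin: "finite (insert e (\<alpha> ` C))" using C by simp
  have "\<beta> \<in> insert e (\<alpha> ` C)" unfolding \<beta>_def by (rule Min_in[OF fin]) simp
  hence \<beta>E: "\<beta> \<in> E" using grp_e[OF G] U by auto
  have \<beta>le: "\<And>y. y \<in> C \<Longrightarrow> \<beta> \<le> \<alpha> y" unfolding \<beta>_def using Min_le[OF fin] by blast
  have "H \<eta> x0 \<notin> K" if \<eta>: "\<eta> \<in> E" "\<eta> \<le> \<beta>" for \<eta>
  proof
    assume "H \<eta> x0 \<in> K"
    then obtain y where y: "y \<in> C" "H \<eta> x0 \<in> U y" using C(3) by blast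
    have "H (iv \<eta>) ` U y \<subseteq> V" using U[of y] \<beta>le[OF y(1)] \<eta> by auto
    hence "H (iv \<eta>) (H \<eta> x0) \<in> V" using y(2) by blast
    thus False using action_inverse_cancel[OF act G \<eta>(1)] V(3) by simp
  qed
  thus ?thesis using \<beta>E by blast
qed

lemma Kc_vanishes_off_support:
  assumes "x \<notin> closure {x. \<phi> x \<noteq> 0}"
  shows "\<phi> x = 0"
  using assms closure_subset[of "{x. \<phi> x \<noteq> 0}"] by blast

lemma Kc_bounded:
  assumes \<phi>: "\<phi> \<in> Kc"
  shows "\<exists>B. \<forall>x. \<bar>\<phi> x\<bar> \<le> B"
proof -
  define K where "K = closure {x. \<phi> x \<noteq> 0}"
  have "continuous_on K \<phi>" using \<phi> unfolding Kc_def by (blast intro: continuous_on_subset)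
  moreover have "compact K" using \<phi> unfolding Kc_def K_def by blast
  ultimately have "bounded (\<phi> ` K)" by (intro compact_imp_bounded compact_continuous_image)
  then obtain B where B: "\<forall>y\<in>\<phi> ` K. norm y \<le> B" unfolding bounded_iff by blast
  have "\<bar>\<phi> x\<bar> \<le> max B 0" for x
  proof (cases "x \<in> K")
    case True
    thus ?thesis using B by fastforce
  next
    case False
    thus ?thesis using Kc_vanishes_off_support[of x \<phi>] unfolding K_def by simp
  qed
  thus ?thesis by blast
qed

lemma bump_exists:
  fixes x0 \<omega> :: "'a::t2_space"
  assumes lc: "locally_compact_space (euclidean :: 'a topology)" and ne: "x0 \<noteq> \<omega>"
  shows "\<exists>\<phi>\<in>Kc. (\<forall>x. 0 \<le> \<phi> x) \<and> \<phi> \<omega> = 0 \<and> 0 < \<phi> x0"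
proof -
  obtain U K where U: "open U" "compact K" "x0 \<in> U" "U \<subseteq> K"
    using lc unfolding locally_compact_space_def by (auto 0 0) blast
  obtain V where V: "open V" "x0 \<in> V" "\<omega> \<notin> V"
    using t1_space[OF ne] by blast
  have "Hausdorff_space (euclidean :: 'a topology)"
    unfolding Hausdorff_space_def disjnt_def using hausdorff by fastforce
  hence "completely_regular_space (euclidean :: 'a topology)"
    using locally_compact_regular_imp_completely_regular_space[OF lc] by blast
  moreover have "closedin euclidean (- (U \<inter> V))" using U(1) V(1) by (simp add: open_Int closed_open)
  moreover have "x0 \<in> topspace euclidean - (- (U \<inter> V))" using U V by auto
  ultimately obtain f :: "'a \<Rightarrow> real" where f: "continuous_map euclidean (top_of_set {0..1}) f"
    "f x0 = 0" "f ` (- (U \<inter> V)) \<subseteq> {1}"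
    unfolding completely_regular_space_def by blast
  have fc: "continuous_on UNIV f"
    using f(1) continuous_map_in_subtopology by (metis continuous_map_iff_continuous subtopology_UNIV)
  define \<phi> where "\<phi> x = max 0 (1/2 - f x)" for x
  have \<phi>c: "continuous_on UNIV \<phi>" unfolding \<phi>_def by (intro continuous_intros fc)
  have "closed {x. f x \<le> 1/2}"
    using closed_Collect_le[OF fc continuous_on_const] by blast
  moreover have "{x. \<phi> x \<noteq> 0} \<subseteq> {x. f x \<le> 1/2}" unfolding \<phi>_def by auto
  ultimately have "closure {x. \<phi> x \<noteq> 0} \<subseteq> {x. f x \<le> 1/2}"
    by (rule closure_minimal[rotated])
  also have "\<dots> \<subseteq> U \<inter> V" using f(3) by force
  finally have "closure {x. \<phi> x \<noteq> 0} \<subseteq> K" using U(4) by blast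
  hence "compact (closure {x. \<phi> x \<noteq> 0})"
    using compact_Int_closed[OF U(2) closed_closure, of "{x. \<phi> x \<noteq> 0}"] by (metis Int_absorb1 inf_commute)
  hence "\<phi> \<in> Kc" unfolding Kc_def using \<phi>c by auto
  moreover have "\<phi> \<omega> = 0" using f(3) V(3) unfolding \<phi>_def by force
  moreover have "0 < \<phi> x0" "\<forall>x. 0 \<le> \<phi> x" using f(2) unfolding \<phi>_def by simp_all
  ultimately show ?thesis by blast
qed

subsection \<open>Haar measures on E\<close>

lemma haar_sets:
  assumes "haar_measure E mul m"
  shows "sets m = sets (restrict_space borel E)"
  using assms unfolding haar_measure_def by blast

lemma haar_space:
  assumes "haar_measure E mul m"
  shows "space m = E"
  using sets_eq_imp_space_eq[OF haar_sets[OF assms]] by (simp add: space_restrict_space)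

lemma haar_openin_sets:
  assumes haar: "haar_measure E mul m" and X: "openin (top_of_set E) X"
  shows "X \<in> sets m"
proof -
  obtain Ob where "open Ob" "X = E \<inter> Ob" using X by (auto simp: openin_open)
  hence "X \<in> sets (restrict_space borel E)" unfolding sets_restrict_space by auto
  thus ?thesis using haar_sets[OF haar] by simp
qed

lemma haar_measurable_continuous:
  fixes f :: "real \<Rightarrow> 'b::topological_space"
  assumes haar: "haar_measure E mul m" and f: "continuous_on E f"
  shows "f \<in> borel_measurable m"
  using borel_measurable_continuous_on_restrict[OF f]
    measurable_cong_sets[OF haar_sets[OF haar], of borel borel] by metis

lemma left_translation_continuous:
  assumes cont: "continuous_on (E \<times> E) (\<lambda>p. mul (fst p) (snd p))" and a: "a \<in> E"
  shows "continuous_on E (mul a)"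
proof -
  have "continuous_on E (\<lambda>x. (a, x))" by (intro continuous_intros)
  moreover have "(\<lambda>x. (a, x)) ` E \<subseteq> E \<times> E" using a by auto
  ultimately have "continuous_on E ((\<lambda>p. mul (fst p) (snd p)) \<circ> (\<lambda>x. (a, x)))"
    using continuous_on_compose continuous_on_subset cont by blast
  thus ?thesis by (simp add: o_def)
qed

lemma haar_translation_measurable:
  assumes G: "real_abelian_group E mul e iv"
    and cont: "continuous_on (E \<times> E) (\<lambda>p. mul (fst p) (snd p))"
    and haar: "haar_measure E mul m" and a: "a \<in> E"
  shows "mul a \<in> measurable m m"
proof -
  have "mul a \<in> measurable (restrict_space borel E) (restrict_space borel E)"
    using grp_closed[OF G a] borel_measurable_continuous_on_restrict[OF left_translation_continuous[OF cont a]]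
    by (intro measurable_restrict_space2) (auto simp: space_restrict_space)
  thus ?thesis using measurable_cong_sets[OF haar_sets[OF haar] haar_sets[OF haar]] by simp
qed

lemma haar_distr_translation:
  assumes G: "real_abelian_group E mul e iv"
    and cont: "continuous_on (E \<times> E) (\<lambda>p. mul (fst p) (snd p))"
    and haar: "haar_measure E mul m" and a: "a \<in> E"
  shows "distr m m (mul a) = m"
proof (rule measure_eqI)
  fix A assume "A \<in> sets (distr m m (mul a))"
  hence A: "A \<in> sets m" by simp
  hence AE: "A \<subseteq> E" using sets.sets_into_space haar_space[OF haar] by blast
  have ia: "iv a \<in> E" using grp_ivE[OF G a] .
  have "mul a -` A \<inter> space m = mul (iv a) ` A"
  proof (intro equalityI subsetI)
    fix x assume "x \<in> mul a -` A \<inter> space m"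
    hence "x \<in> E" "mul a x \<in> A" using haar_space[OF haar] by auto
    thus "x \<in> mul (iv a) ` A" using grp_cancel(1)[OF G a] by (metis image_eqI)
  next
    fix x assume "x \<in> mul (iv a) ` A"
    then obtain y where y: "y \<in> A" "x = mul (iv a) y" by blast
    hence "y \<in> E" using AE by blast
    thus "x \<in> mul a -` A \<inter> space m"
      using y grp_closed[OF G ia] grp_cancel(2)[OF G a] haar_space[OF haar] by auto
  qed
  hence "emeasure (distr m m (mul a)) A = emeasure m (mul (iv a) ` A)"
    using emeasure_distr[OF haar_translation_measurable[OF G cont haar a] A] by simp
  also have "\<dots> = emeasure m A" using haar ia A unfolding haar_measure_def by blast
  finally show "emeasure (distr m m (mul a)) A = emeasure m A" .
qed simp

lemma haar_integral_translate:
  fixes f :: "real \<Rightarrow> real"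
  assumes G: "real_abelian_group E mul e iv"
    and cont: "continuous_on (E \<times> E) (\<lambda>p. mul (fst p) (snd p))"
    and haar: "haar_measure E mul m" and a: "a \<in> E" and f: "f \<in> borel_measurable m"
  shows "(\<integral>\<eta>. f (mul a \<eta>) \<partial>m) = integral\<^sup>L m f"
  using integral_distr[OF haar_translation_measurable[OF G cont haar a] f]
    haar_distr_translation[OF G cont haar a] by simp

lemma translate_openin:
  assumes G: "real_abelian_group E mul e iv"
    and cont: "continuous_on (E \<times> E) (\<lambda>p. mul (fst p) (snd p))"
    and S: "openin (top_of_set E) S" and b: "b \<in> E"
  shows "openin (top_of_set E) (mul b ` S)"
proof -
  have SE: "S \<subseteq> E" using S by (rule openin_imp_subset)
  obtain Ob where Ob: "open Ob" "S = E \<inter> Ob" using S by (auto simp: openin_open)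
  have ib: "iv b \<in> E" using grp_ivE[OF G b] .
  have "mul b ` S = E \<inter> mul (iv b) -` Ob"
  proof (intro equalityI subsetI)
    fix x assume "x \<in> mul b ` S"
    then obtain s where "s \<in> S" "x = mul b s" by blast
    thus "x \<in> E \<inter> mul (iv b) -` Ob"
      using SE Ob grp_cancel(1)[OF G b] grp_closed[OF G b] by auto
  next
    fix x assume x: "x \<in> E \<inter> mul (iv b) -` Ob"
    hence "mul (iv b) x \<in> S" using Ob grp_closed[OF G ib] by blast
    thus "x \<in> mul b ` S" using grp_cancel(2)[OF G b, of x] x by (metis IntD1 image_eqI)
  qed
  thus ?thesis
    using continuous_openin_preimage_gen[OF left_translation_continuous[OF cont ib] Ob(1)] by simp
qed

text \<open>
  Nonempty relatively open subsets of E have positive Haar measure: otherwise E, covered by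
  countably many (Lindelof) null translates, would be null.
\<close>
lemma haar_open_pos:
  assumes G: "real_abelian_group E mul e iv"
    and cont: "continuous_on (E \<times> E) (\<lambda>p. mul (fst p) (snd p))"
    and haar: "haar_measure E mul m" and S: "openin (top_of_set E) S" and s0: "s0 \<in> S"
  shows "emeasure m S \<noteq> 0"
proof
  assume S0: "emeasure m S = 0"
  define T where "T b = mul b ` S" for b
  have Topen: "\<And>b. b \<in> E \<Longrightarrow> openin (top_of_set E) (T b)"
    unfolding T_def using translate_openin[OF G cont S] .
  have Tnull: "T b \<in> null_sets m" if b: "b \<in> E" for b
    using haar b S0 haar_openin_sets[OF haar S] haar_openin_sets[OF haar Topen[OF b]]
    unfolding haar_measure_def T_def by auto
  have s0E: "s0 \<in> E" using s0 openin_imp_subset[OF S] by blast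
  have "E \<subseteq> \<Union>(T ` E)"
  proof
    fix a assume a: "a \<in> E"
    have "a \<in> T (mul a (iv s0))"
      unfolding T_def using s0 grp_translate_onto[OF G a s0E] by (metis image_eqI)
    thus "a \<in> \<Union>(T ` E)" using grp_closed[OF G a grp_ivE[OF G s0E]] by blast
  qed
  moreover obtain F where F: "F \<subseteq> T ` E" "countable F" "\<Union>F = \<Union>(T ` E)"
    using Lindelof_openin[of "T ` E" E] Topen by blast
  moreover have "\<Union>F \<in> null_sets m"
    using null_sets_UN'[OF F(2), of id m] F(1) Tnull by auto
  moreover have "\<Union>(T ` E) \<subseteq> E" using Topen openin_imp_subset by blast
  ultimately have "E \<in> null_sets m" by (metis subset_antisym)
  thus False using haar unfolding haar_measure_def by blast
qed

lemma haar_integral_pos: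
  fixes f :: "real \<Rightarrow> real"
  assumes G: "real_abelian_group E mul e iv"
    and cont: "continuous_on (E \<times> E) (\<lambda>p. mul (fst p) (snd p))"
    and haar: "haar_measure E mul m"
    and fc: "continuous_on E f" and nn: "\<forall>x\<in>E. 0 \<le> f x" and fi: "integrable m f"
    and s0: "s0 \<in> E" "0 < f s0"
  shows "0 < integral\<^sup>L m f"
proof -
  have sm: "space m = E" using haar_space[OF haar] .
  define S where "S = E \<inter> f -` {0<..}"
  have S: "openin (top_of_set E) S"
    unfolding S_def by (rule continuous_openin_preimage_gen[OF fc open_greaterThan])
  have AEnn: "AE x in m. 0 \<le> f x" using nn sm by auto
  have "{x \<in> space m. f x \<noteq> 0} = S" using nn sm unfolding S_def by force
  hence "(AE x in m. f x = 0) \<longleftrightarrow> emeasure m S = 0"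
    using AE_iff_measurable[OF haar_openin_sets[OF haar S]] by simp
  moreover have "emeasure m S \<noteq> 0" using haar_open_pos[OF G cont haar S] s0 unfolding S_def by simp
  ultimately have "integral\<^sup>L m f \<noteq> 0" using integral_nonneg_eq_0_iff_AE[OF fi AEnn] by simp
  thus ?thesis using integral_nonneg_AE[OF AEnn] by linarith
qed

subsection \<open>The orbit functional\<close>

text \<open>The image of h\<cdot>m under the orbit map \<eta> \<mapsto> H \<eta> x0, as a linear form on functions on X.\<close>
definition orbit_form :: "real measure \<Rightarrow> (real \<Rightarrow> real) \<Rightarrow> (real \<Rightarrow> 'a \<Rightarrow> 'a) \<Rightarrow> 'a \<Rightarrow> ('a \<Rightarrow> real) \<Rightarrow> real"
  where "orbit_form m h H x0 \<phi> = (\<integral>\<eta>. h \<eta> * \<phi> (H \<eta> x0) \<partial>m)"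

lemma orbit_integrand_continuous:
  assumes ca: "continuous_action E H" and hc: "continuous_on E h" and \<phi>: "\<phi> \<in> Kc"
  shows "continuous_on E (\<lambda>\<eta>. h \<eta> * \<phi> (H \<eta> x0))"
proof -
  have "continuous_on E (\<phi> \<circ> (\<lambda>\<eta>. H \<eta> x0))"
    using \<phi> continuous_on_compose[OF orbit_continuous[OF ca]] continuous_on_subset
    unfolding Kc_def by blast
  thus ?thesis using hc by (intro continuous_intros) (auto simp: o_def)
qed

text \<open>
  Integrability of the integrand, the analytic core: below some \<beta> it vanishes because the
  orbit has left the support of \<phi>; above \<beta> it is dominated by a multiple of h.
\<close>
lemma orbit_integrand_integrable:
  fixes H :: "real \<Rightarrow> 'a::t2_space \<Rightarrow> 'a"
  assumes G: "real_abelian_group E mul e iv" and act: "action E mul e H"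
    and ca: "continuous_action E H" and ab: "absorptive_center E iv H \<omega>"
    and h: "pos_char E mul h" and haar: "haar_measure E mul m" and ui: "upper_integrable E m h"
    and x0: "x0 \<noteq> \<omega>" and \<phi>: "\<phi> \<in> Kc"
  shows "integrable m (\<lambda>\<eta>. h \<eta> * \<phi> (H \<eta> x0))"
proof -
  have sm: "space m = E" using haar_space[OF haar] .
  obtain B where B: "\<And>x. \<bar>\<phi> x\<bar> \<le> B" using Kc_bounded[OF \<phi>] by blast
  have B0: "0 \<le> B" using B[of undefined] by linarith
  obtain \<beta> where \<beta>: "\<beta> \<in> E" "\<forall>\<eta>\<in>E. \<eta> \<le> \<beta> \<longrightarrow> H \<eta> x0 \<notin> closure {x. \<phi> x \<noteq> 0}"
    using orbit_escapes_compacts[OF act G ab x0] \<phi> unfolding Kc_def by blast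
  let ?U = "{\<epsilon>\<in>E. \<beta> \<le> \<epsilon>}"
  have "integrable m (\<lambda>\<eta>. indicator ?U \<eta> *\<^sub>R h \<eta>)"
    using ui \<beta>(1) unfolding upper_integrable_def set_integrable_def by blast
  hence "integrable m (\<lambda>\<eta>. B * (indicator ?U \<eta> *\<^sub>R h \<eta>))"
    by (rule integrable_mult_right)
  moreover have "(\<lambda>\<eta>. h \<eta> * \<phi> (H \<eta> x0)) \<in> borel_measurable m"
    using haar_measurable_continuous[OF haar orbit_integrand_continuous[OF ca _ \<phi>]] h
    unfolding pos_char_def by blast
  moreover have "AE \<eta> in m. norm (h \<eta> * \<phi> (H \<eta> x0)) \<le> norm (B * (indicator ?U \<eta> *\<^sub>R h \<eta>))"
  proof (rule AE_I2)
    fix \<eta> assume "\<eta> \<in> space m"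
    hence \<eta>: "\<eta> \<in> E" using sm by simp
    show "norm (h \<eta> * \<phi> (H \<eta> x0)) \<le> norm (B * (indicator ?U \<eta> *\<^sub>R h \<eta>))"
    proof (cases "\<beta> \<le> \<eta>")
      case True
      have h0: "0 < h \<eta>" using h \<eta> unfolding pos_char_def by blast
      have "norm (h \<eta> * \<phi> (H \<eta> x0)) = h \<eta> * \<bar>\<phi> (H \<eta> x0)\<bar>" using h0 by (simp add: abs_mult)
      also have "\<dots> \<le> h \<eta> * B" using h0 B by (simp add: mult_left_mono)
      also have "\<dots> = norm (B * (indicator ?U \<eta> *\<^sub>R h \<eta>))"
        using True \<eta> h0 B0 by (simp add: abs_mult indicator_def)
      finally show ?thesis .
    next
      case False
      hence "H \<eta> x0 \<notin> closure {x. \<phi> x \<noteq> 0}" using \<beta>(2) \<eta> by simp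
      hence "\<phi> (H \<eta> x0) = 0" by (rule Kc_vanishes_off_support)
      thus ?thesis by simp
    qed
  qed
  ultimately show ?thesis by (rule Bochner_Integration.integrable_bound)
qed

lemma orbit_form_positive_radon:
  assumes integ: "\<And>\<phi>. \<phi> \<in> Kc \<Longrightarrow> integrable m (\<lambda>\<eta>. h \<eta> * \<phi> (H \<eta> x0))"
    and hnn: "\<And>\<eta>. \<eta> \<in> space m \<Longrightarrow> 0 \<le> h \<eta>"
  shows "positive_radon (orbit_form m h H x0)"
  unfolding positive_radon_def orbit_form_def
proof (intro conjI ballI allI impI)
  fix \<phi> \<psi> :: "'a \<Rightarrow> real" assume "\<phi> \<in> Kc" "\<psi> \<in> Kc"
  thus "(\<integral>\<eta>. h \<eta> * (\<phi> (H \<eta> x0) + \<psi> (H \<eta> x0)) \<partial>m)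
        = (\<integral>\<eta>. h \<eta> * \<phi> (H \<eta> x0) \<partial>m) + (\<integral>\<eta>. h \<eta> * \<psi> (H \<eta> x0) \<partial>m)"
    using Bochner_Integration.integral_add[OF integ integ] by (simp add: distrib_left)
next
  fix \<phi> :: "'a \<Rightarrow> real" and c :: real
  show "(\<integral>\<eta>. h \<eta> * (c * \<phi> (H \<eta> x0)) \<partial>m) = c * (\<integral>\<eta>. h \<eta> * \<phi> (H \<eta> x0) \<partial>m)"
    by (simp add: ac_simps)
next
  fix \<phi> :: "'a \<Rightarrow> real" assume "\<forall>x. 0 \<le> \<phi> x"
  thus "0 \<le> (\<integral>\<eta>. h \<eta> * \<phi> (H \<eta> x0) \<partial>m)"
    using hnn by (intro Bochner_Integration.integral_nonneg) simp
qed

lemma orbit_form_equivariant: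
  assumes G: "real_abelian_group E mul e iv"
    and cont: "continuous_on (E \<times> E) (\<lambda>p. mul (fst p) (snd p))"
    and act: "action E mul e H" and h: "pos_char E mul h" and haar: "haar_measure E mul m"
    and meas: "(\<lambda>\<eta>. h \<eta> * \<phi> (H \<eta> x0)) \<in> borel_measurable m" and \<epsilon>: "\<epsilon> \<in> E"
  shows "image_radon (H \<epsilon>) (orbit_form m h H x0) \<phi> = h (iv \<epsilon>) * orbit_form m h H x0 \<phi>"
proof -
  have sm: "space m = E" using haar_space[OF haar] .
  have i\<epsilon>: "iv \<epsilon> \<in> E" using grp_ivE[OF G \<epsilon>] .
  define F where "F \<zeta> = h (mul (iv \<epsilon>) \<zeta>) * \<phi> (H \<zeta> x0)" for \<zeta>
  have Feq: "F \<zeta> = h (iv \<epsilon>) * (h \<zeta> * \<phi> (H \<zeta> x0))" if "\<zeta> \<in> E" for \<zeta>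
    using h i\<epsilon> that unfolding F_def pos_char_def by simp
  have Fmeas: "F \<in> borel_measurable m"
    using measurable_cong[of m F "\<lambda>\<zeta>. h (iv \<epsilon>) * (h \<zeta> * \<phi> (H \<zeta> x0))"] Feq meas sm by simp
  have "image_radon (H \<epsilon>) (orbit_form m h H x0) \<phi> = (\<integral>\<eta>. F (mul \<epsilon> \<eta>) \<partial>m)"
    unfolding image_radon_def orbit_form_def F_def
    using action_apply_mul[OF act \<epsilon>] grp_cancel(1)[OF G \<epsilon>] sm
    by (intro Bochner_Integration.integral_cong) auto
  also have "\<dots> = integral\<^sup>L m F" using haar_integral_translate[OF G cont haar \<epsilon> Fmeas] .
  also have "\<dots> = (\<integral>\<zeta>. h (iv \<epsilon>) * (h \<zeta> * \<phi> (H \<zeta> x0)) \<partial>m)"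
    using Feq sm by (intro Bochner_Integration.integral_cong) auto
  also have "\<dots> = h (iv \<epsilon>) * orbit_form m h H x0 \<phi>" unfolding orbit_form_def by simp
  finally show ?thesis .
qed

text \<open>Nontriviality: a bump at x0 vanishing at \<omega> has positive mass but Dirac mass 0 at \<omega>.\<close>
lemma orbit_form_nontrivial:
  fixes H :: "real \<Rightarrow> 'a::t2_space \<Rightarrow> 'a"
  assumes G: "real_abelian_group E mul e iv"
    and cont: "continuous_on (E \<times> E) (\<lambda>p. mul (fst p) (snd p))"
    and act: "action E mul e H" and ca: "continuous_action E H"
    and h: "pos_char E mul h" and haar: "haar_measure E mul m"
    and lc: "locally_compact_space (euclidean :: 'a topology)" and x0: "x0 \<noteq> \<omega>"
    and integ: "\<And>\<phi>. \<phi> \<in> Kc \<Longrightarrow> integrable m (\<lambda>\<eta>. h \<eta> * \<phi> (H \<eta> x0))"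
  shows "nontrivial_radon \<omega> (orbit_form m h H x0)"
proof -
  obtain \<phi> where \<phi>: "\<phi> \<in> Kc" "\<forall>x. 0 \<le> \<phi> x" "\<phi> \<omega> = 0" "0 < \<phi> x0"
    using bump_exists[OF lc x0] by blast
  have hpos: "\<And>\<eta>. \<eta> \<in> E \<Longrightarrow> 0 < h \<eta>" using h unfolding pos_char_def by blast
  have "H e = id" using act unfolding action_def by blast
  hence "0 < h e * \<phi> (H e x0)" using \<phi>(4) hpos[OF grp_e[OF G]] by simp
  moreover have "continuous_on E (\<lambda>\<eta>. h \<eta> * \<phi> (H \<eta> x0))"
    using orbit_integrand_continuous[OF ca _ \<phi>(1)] h unfolding pos_char_def by blast
  moreover have "\<forall>\<eta>\<in>E. 0 \<le> h \<eta> * \<phi> (H \<eta> x0)" using hpos \<phi>(2) by (simp add: less_imp_le)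
  ultimately have "0 < orbit_form m h H x0 \<phi>"
    unfolding orbit_form_def
    using haar_integral_pos[OF G cont haar _ _ integ[OF \<phi>(1)] grp_e[OF G]] by blast
  thus ?thesis unfolding nontrivial_radon_def using \<phi>(1,3) by force
qed

lemma homogeneous_measure_for_character:
  fixes H :: "real \<Rightarrow> 'a::t2_space \<Rightarrow> 'a"
  assumes G: "real_abelian_group E mul e iv"
    and cont: "continuous_on (E \<times> E) (\<lambda>p. mul (fst p) (snd p))"
    and lc: "locally_compact_space (euclidean :: 'a topology)" and two: "\<exists>x y :: 'a. x \<noteq> y"
    and act: "action E mul e H" and ca: "continuous_action E H" and ab: "absorptive_center E iv H \<omega>"
    and h: "pos_char E mul h" and haar: "haar_measure E mul m" and ui: "upper_integrable E m h"
  shows "\<exists>L. positive_radon L \<and> nontrivial_radon \<omega> L \<and>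
             (\<forall>\<epsilon>\<in>E. \<forall>\<phi>\<in>Kc. image_radon (H \<epsilon>) L \<phi> = h (iv \<epsilon>) * L \<phi>)"
proof -
  obtain x0 where x0: "x0 \<noteq> \<omega>" using two by metis
  note integ = orbit_integrand_integrable[OF G act ca ab h haar ui x0]
  have "positive_radon (orbit_form m h H x0)"
    using orbit_form_positive_radon[of m h H x0, OF integ] h haar_space[OF haar]
    unfolding pos_char_def by (simp add: less_imp_le)
  moreover have "nontrivial_radon \<omega> (orbit_form m h H x0)"
    using orbit_form_nontrivial[OF G cont act ca h haar lc x0 integ] .
  moreover have "\<forall>\<epsilon>\<in>E. \<forall>\<phi>\<in>Kc. image_radon (H \<epsilon>) (orbit_form m h H x0) \<phi>
                                  = h (iv \<epsilon>) * orbit_form m h H x0 \<phi>"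
  proof (intro ballI)
    fix \<epsilon> and \<phi> :: "'a \<Rightarrow> real" assume \<epsilon>: "\<epsilon> \<in> E" and \<phi>: "\<phi> \<in> Kc"
    show "image_radon (H \<epsilon>) (orbit_form m h H x0) \<phi> = h (iv \<epsilon>) * orbit_form m h H x0 \<phi>"
      using orbit_form_equivariant[OF G cont act h haar borel_measurable_integrable[OF integ[OF \<phi>]] \<epsilon>] .
  qed
  ultimately show ?thesis by blast
qed

theorem theorem3p1:
  fixes E :: "real set" and mul :: "real \<Rightarrow> real \<Rightarrow> real" and e :: real and iv :: "real \<Rightarrow> real"
    and H :: "real \<Rightarrow> 'a::{t2_space, first_countable_topology} \<Rightarrow> 'a" and \<omega> :: 'a
  assumes "R_group E mul e iv"
    and "locally_compact_space (euclidean :: 'a topology)"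
    and "\<exists>x y :: 'a. x \<noteq> y"
    and "action E mul e H" and "continuous_action E H" and "absorptive_center E iv H \<omega>"
  shows "(\<forall>h m. pos_char E mul h \<and> nonconstant_on E h \<and> haar_measure E mul m \<and> upper_integrable E m h \<longrightarrow>
            (\<exists>L. positive_radon L \<and> nontrivial_radon \<omega> L \<and>
                 (\<forall>\<epsilon>\<in>E. \<forall>\<phi>\<in>Kc. image_radon (H \<epsilon>) L \<phi> = h (iv \<epsilon>) * L \<phi>)))
       \<and> (\<exists>L. homogeneous_radon E H L \<and> nontrivial_radon \<omega> L)"
proof -
  have G: "real_abelian_group E mul e iv"
    and cont: "continuous_on (E \<times> E) (\<lambda>p. mul (fst p) (snd p))"
    and RG3: "\<exists>h. pos_char E mul h \<and> (\<exists>m. haar_measure E mul m \<and> upper_integrable E m h)"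
    using assms(1) unfolding R_group_def by blast+
  note main = homogeneous_measure_for_character[OF G cont assms(2-6)]
  obtain h m where h: "pos_char E mul h" and "haar_measure E mul m" "upper_integrable E m h"
    using RG3 by blast
  then obtain L where L: "positive_radon L" "nontrivial_radon \<omega> L"
      "\<forall>\<epsilon>\<in>E. \<forall>\<phi>\<in>Kc. image_radon (H \<epsilon>) L \<phi> = h (iv \<epsilon>) * L \<phi>"
    using main by blast
  have "\<forall>\<epsilon>\<in>E. 0 < h (iv \<epsilon>)" using h grp_ivE[OF G] unfolding pos_char_def by blast
  hence "homogeneous_radon E H L" unfolding homogeneous_radon_def using L(1,3) by blast
  thus ?thesis using main L(2) by blast
qed

end
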